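(* In the model described in the context, if all high-level operations are totally ordered and $\tau\ge 3f+1$, then Algorithm 1 with threshold $t=f+1$ satisfies both completeness and strong accuracy.
   Context: Model. An asynchronous system has client processes (writers, readers, auditors) and $n$ storage objects $o_1,\dots,o_n$. Each $o_k$ is a linearisable loggable read/write register with a log $L_k$ (initially empty). Its rw-write($b$) stores a block; rw-read() returns the current block and appends $\langle p_r,\mathit{label}(b)\rangle$ to $L_k$, where $p_r$ is the reader and $\mathit{label}(b)$ identifies the value from which $b$ was derived; rw-getLog() returns $L_k$. A register over values $\mathbb{V}$ is emulated by information dispersal. An a-write($v$) encodes $v$ into $b_{v_1},\dots,b_{v_n}$ with $b_{v_k}$ sent to $o_k$. Any $\tau$ distinct blocks of $v$ recover $v$, and fewer do not. Total order: all high-level operations are serialised via total order broadcast and executed sequentially, so objects hold blocks of a single value. Faults. Writers and auditors can only crash. Faulty readers may crash or contact a subset of objects. At most $f$ objects are faulty; a faulty object may crash, omit its block, omit log records from auditors, and report records of nonexistent reads. Providing set $P_{p_r,v}$: the set of objects that received a write of $b_{v_k}$ and responded $b_{v_k}$ to a read of $p_r$. The value $v$ is effectively read by $p_r$ iff $|P_{p_r,v}|\ge\tau$. Algorithm 1 (a-audit with threshold $t$): 1. Invoke rw-getLog on all $n$ objects in parallel, and wait for responses from at least $n-f$; let $L[k]$ be the log received from $o_k$. 2. For every record $\langle p_r,\mathit{label}(v)\rangle$ in some $L[k]$, let $\mathcal{E}_{p_r,v}=\{k:\langle p_r,\mathit{label}(v)\rangle\in L[k]\}$, and add it to $E_A$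 iff $|\mathcal{E}_{p_r,v}|\ge t$. 3. Return $E_A$. Completeness: $|P_{p_r,v}|\ge\tau$ before the audit implies $\mathcal{E}_{p_r,v}\in E_A$. Strong accuracy: for every correct reader $p_r$ and every value $v$, $|P_{p_r,v}|<\tau$ before the audit implies $\mathcal{E}_{p_r,v}\notin E_A$. *)

theory Defs
  imports Main
begin

text \<open>
Objects are the natural numbers below n.  Since all
high-level operations are totally ordered and executed sequentially, the
execution preceding the audit is a list of high-level operations.
An a-read of reader p is recorded together with the set S of storage objects
at which its rw-read took effect (was applied by the linearisable object).
Crashed writes that never took effect are not part of the history.
Labels are identified with values (label is injective).
\<close>

datatype ('p, 'v) hop = AWrite 'v | ARead 'p "nat set"

text \<open>Value whose blocks are held by correct objects after the operations xs
(None if no write took effect yet).\<close>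
definition last_write :: "('p, 'v) hop list \<Rightarrow> 'v option" where
  "last_write xs = foldl (\<lambda>acc op. case op of AWrite v \<Rightarrow> Some v | ARead _ _ \<Rightarrow> acc) None xs"

text \<open>Block (identified by the value it was derived from) returned by object k
to the i-th operation of h (a read).\<close>
definition resp ::
  "nat set \<Rightarrow> (nat \<Rightarrow> nat \<Rightarrow> 'v option) \<Rightarrow> ('p, 'v) hop list \<Rightarrow> nat \<Rightarrow> nat \<Rightarrow> 'v option" where
  "resp F fr h i k = (if k \<in> F then fr i k else last_write (take i h))"

text \<open>Providing set P_{p,v}: objects that received a write of the block of v
and responded that block to a read of p.\<close>
definition providing_set ::
  "nat \<Rightarrow> nat set \<Rightarrow> (nat \<Rightarrow> nat \<Rightarrow> 'v option) \<Rightarrow> ('p, 'v) hop list \<Rightarrow> 'p \<Rightarrow> 'v \<Rightarrow> nat set" where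
  "providing_set n F fr h p v =
     {k \<in> {..<n}. \<exists>i<length h. \<exists>S. h ! i = ARead p S \<and> k \<in> S \<and> resp F fr h i k = Some v}"

text \<open>Actual log of a (correct) object k after history h, as a set of records
(reader, label of value).\<close>
definition true_log ::
  "nat set \<Rightarrow> (nat \<Rightarrow> nat \<Rightarrow> 'v option) \<Rightarrow> ('p, 'v) hop list \<Rightarrow> nat \<Rightarrow> ('p \<times> 'v) set" where
  "true_log F fr h k =
     {(p, v). \<exists>i<length h. \<exists>S. h ! i = ARead p S \<and> k \<in> S \<and> resp F fr h i k = Some v}"

definition valid_exec ::
  "nat \<Rightarrow> nat \<Rightarrow> nat set \<Rightarrow> (nat \<Rightarrow> nat \<Rightarrow> 'v option) \<Rightarrow> ('p, 'v) hop list \<Rightarrow> 'p set \<Rightarrow> bool" where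
  "valid_exec n f F fr h CR \<longleftrightarrow>
     F \<subseteq> {..<n} \<and> card F \<le> f \<and>
     (\<forall>i k w. fr i k = Some w \<longrightarrow> AWrite w \<in> set (take i h)) \<and>
     (\<forall>i<length h. \<forall>p S. h ! i = ARead p S \<longrightarrow>
         S \<subseteq> {..<n} \<and> (p \<in> CR \<longrightarrow> {..<n} - F \<subseteq> S))"

text \<open>Step 1 of the audit: responses to rw-getLog from the objects in Rsp
(at least n - f of them); RL k is the log reported by o_k.  Correct objects
report their true log; faulty ones may report anything.\<close>
definition valid_getlog ::
  "nat \<Rightarrow> nat \<Rightarrow> nat set \<Rightarrow> (nat \<Rightarrow> nat \<Rightarrow> 'v option) \<Rightarrow> ('p, 'v) hop list \<Rightarrow>
   nat set \<Rightarrow> (nat \<Rightarrow> ('p \<times> 'v) set) \<Rightarrow> bool" where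
  "valid_getlog n f F fr h Rsp RL \<longleftrightarrow>
     Rsp \<subseteq> {..<n} \<and> n - f \<le> card Rsp \<and>
     (\<forall>k \<in> Rsp - F. RL k = true_log F fr h k)"

definition evid_set :: "nat set \<Rightarrow> (nat \<Rightarrow> ('p \<times> 'v) set) \<Rightarrow> 'p \<Rightarrow> 'v \<Rightarrow> nat set" where
  "evid_set Rsp RL p v = {k \<in> Rsp. (p, v) \<in> RL k}"

text \<open>Algorithm 1 with threshold t; each element of E_A is tagged with the
record (p, label v) it refers to.\<close>
definition a_audit ::
  "nat \<Rightarrow> nat set \<Rightarrow> (nat \<Rightarrow> ('p \<times> 'v) set) \<Rightarrow> ('p \<times> 'v \<times> nat set) set" where
  "a_audit t Rsp RL =
     {(p, v, E). (\<exists>k \<in> Rsp. (p, v) \<in> RL k) \<and> E = evid_set Rsp RL p v \<and> t \<le> card E}"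

end

theory Submission
  imports Defs
begin

text \<open>
Completeness is a counting argument: at least \<open>\<tau>\<close> objects provided \<open>v\<close> to \<open>p\<close>
and at least \<open>n - f\<close> objects answered the audit, so at least \<open>\<tau> - 2f\<close> correct
objects lie in both sets, and each of them reports the read in its log; with
\<open>\<tau> \<ge> 3f + 1\<close> this reaches the threshold \<open>f + 1\<close>.  Strong accuracy rests on the
reader being correct: its rw-read takes effect at every correct object, and all
correct objects hold the same block, so a single correct object logging the read
of \<open>v\<close> would make all \<open>n - f \<ge> \<tau>\<close> correct objects providers.  Hence only faulty
objects can report such a read, and there are at most \<open>f\<close> of them.
\<close>

lemma card_Int_Diff_lower_bound:
  assumes "finite U" "A \<subseteq> U" "B \<subseteq> U" "C \<subseteq> U"
  shows "card A + card B \<le> card U + card (A \<inter> B - C) + card C"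
proof -
  have fin: "finite A" "finite B" "finite C"
    using assms finite_subset by blast+
  have "card (A \<union> B) \<le> card U"
    using assms by (intro card_mono) auto
  moreover have "card (A \<union> B) + card (A \<inter> B) = card A + card B"
    using card_Un_Int[OF fin(1,2)] by simp
  moreover have "card (A \<inter> B) - card C \<le> card (A \<inter> B - C)"
    using diff_card_le_card_Diff[OF fin(3)] .
  ultimately show ?thesis by linarith
qed

lemma evid_set_in_a_audit_iff:
  assumes "0 < t"
  shows "(p, v, evid_set Rsp RL p v) \<in> a_audit t Rsp RL \<longleftrightarrow> t \<le> card (evid_set Rsp RL p v)"
proof
  assume "t \<le> card (evid_set Rsp RL p v)"
  with assms have "evid_set Rsp RL p v \<noteq> {}" by auto
  then have "\<exists>k \<in> Rsp. (p, v) \<in> RL k" unfolding evid_set_def by auto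
  with \<open>t \<le> card (evid_set Rsp RL p v)\<close> show "(p, v, evid_set Rsp RL p v) \<in> a_audit t Rsp RL"
    unfolding a_audit_def by auto
qed (auto simp: a_audit_def)

lemma correct_providers_subset_evid_set:
  assumes "valid_getlog n f F fr h Rsp RL"
  shows "providing_set n F fr h p v \<inter> Rsp - F \<subseteq> evid_set Rsp RL p v"
proof
  fix k assume k: "k \<in> providing_set n F fr h p v \<inter> Rsp - F"
  then have "RL k = true_log F fr h k"
    using assms unfolding valid_getlog_def by auto
  moreover have "(p, v) \<in> true_log F fr h k"
    using k unfolding providing_set_def true_log_def by auto
  ultimately show "k \<in> evid_set Rsp RL p v"
    using k unfolding evid_set_def by auto
qed

lemma correct_reader_logged_read_providing_set:
  assumes "valid_exec n f F fr h CR" "p \<in> CR" "k \<notin> F" "(p, v) \<in> true_log F fr h k"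
  shows "{..<n} - F \<subseteq> providing_set n F fr h p v"
proof -
  obtain i S where i: "i < length h" "h ! i = ARead p S" "resp F fr h i k = Some v"
    using assms(4) unfolding true_log_def by auto
  have "last_write (take i h) = Some v"
    using i(3) assms(3) unfolding resp_def by simp
  moreover have "{..<n} - F \<subseteq> S"
    using assms(1,2) i(1,2) unfolding valid_exec_def by blast
  ultimately show ?thesis
    using i(1,2) unfolding providing_set_def resp_def by auto
qed

lemma evid_set_subset_faulty:
  assumes exec: "valid_exec n f F fr h CR" and log: "valid_getlog n f F fr h Rsp RL"
    and "p \<in> CR" and few: "card (providing_set n F fr h p v) < n - f"
  shows "evid_set Rsp RL p v \<subseteq> F"
proof
  fix k assume "k \<in> evid_set Rsp RL p v"
  then have k: "k \<in> Rsp" "(p, v) \<in> RL k" unfolding evid_set_def by auto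
  show "k \<in> F"
  proof (rule ccontr)
    assume "k \<notin> F"
    with k log have "(p, v) \<in> true_log F fr h k"
      unfolding valid_getlog_def by auto
    with exec \<open>p \<in> CR\<close> \<open>k \<notin> F\<close>
    have "{..<n} - F \<subseteq> providing_set n F fr h p v"
      by (rule correct_reader_logged_read_providing_set)
    then have "card ({..<n} - F) \<le> card (providing_set n F fr h p v)"
      by (intro card_mono) (auto simp: providing_set_def)
    moreover have "card ({..<n} - F) = n - card F"
      using exec unfolding valid_exec_def by (auto simp: card_Diff_subset finite_subset)
    moreover have "card F \<le> f"
      using exec unfolding valid_exec_def by auto
    ultimately show False using few by linarith
  qed
qed

lemma a_audit_complete:
  assumes exec: "valid_exec n f F fr h CR" and log: "valid_getlog n f F fr h Rsp RL"
    and "0 < t" "t + 2 * f \<le> \<tau>" "\<tau> \<le> card (providing_set n F fr h p v)"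
  shows "(p, v, evid_set Rsp RL p v) \<in> a_audit t Rsp RL"
proof -
  let ?P = "providing_set n F fr h p v"
  have F: "F \<subseteq> {..<n}" "card F \<le> f" and R: "Rsp \<subseteq> {..<n}" "n - f \<le> card Rsp"
    using exec log unfolding valid_exec_def valid_getlog_def by auto
  have "card ?P + card Rsp \<le> n + card (?P \<inter> Rsp - F) + card F"
    using card_Int_Diff_lower_bound[of "{..<n}" ?P Rsp F] F(1) R(1)
    by (auto simp: providing_set_def)
  moreover have "card (?P \<inter> Rsp - F) \<le> card (evid_set Rsp RL p v)"
    using correct_providers_subset_evid_set[OF log]
    using R(1) by (intro card_mono) (auto simp: evid_set_def finite_subset)
  ultimately have "t \<le> card (evid_set Rsp RL p v)"
    using F(2) R(2) assms(4,5) by linarith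
  with \<open>0 < t\<close> show ?thesis by (simp add: evid_set_in_a_audit_iff)
qed

lemma a_audit_strongly_accurate:
  assumes exec: "valid_exec n f F fr h CR" and log: "valid_getlog n f F fr h Rsp RL"
    and "p \<in> CR" "\<tau> + f \<le> n" "card (providing_set n F fr h p v) < \<tau>"
  shows "(p, v, evid_set Rsp RL p v) \<notin> a_audit (f + 1) Rsp RL"
proof -
  have "evid_set Rsp RL p v \<subseteq> F"
    using evid_set_subset_faulty[OF exec log \<open>p \<in> CR\<close>] assms(4,5) by simp
  moreover have "finite F" "card F \<le> f"
    using exec unfolding valid_exec_def by (auto simp: finite_subset)
  ultimately have "card (evid_set Rsp RL p v) \<le> f"
    using card_mono le_trans by blast
  then show ?thesis by (simp add: evid_set_in_a_audit_iff)
qed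

theorem theorem5:
  fixes n f \<tau> :: nat
    and F :: "nat set"
    and fr :: "nat \<Rightarrow> nat \<Rightarrow> 'v option"
    and h :: "('p, 'v) hop list"
    and CR :: "'p set"
    and Rsp :: "nat set"
    and RL :: "nat \<Rightarrow> ('p \<times> 'v) set"
  assumes "3 * f + 1 \<le> \<tau>"
    and "\<tau> + f \<le> n"
    and "valid_exec n f F fr h CR"
    and "valid_getlog n f F fr h Rsp RL"
  shows "(\<forall>p v. \<tau> \<le> card (providing_set n F fr h p v) \<longrightarrow>
            (p, v, evid_set Rsp RL p v) \<in> a_audit (f + 1) Rsp RL)
       \<and> (\<forall>p \<in> CR. \<forall>v. card (providing_set n F fr h p v) < \<tau> \<longrightarrow>
            (p, v, evid_set Rsp RL p v) \<notin> a_audit (f + 1) Rsp RL)"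
  using a_audit_complete[OF assms(3,4), of "f + 1" \<tau>]
    a_audit_strongly_accurate[OF assms(3,4) _ assms(2)] assms(1)
  by auto

end
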